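(* Let $\Omega\subset\mathbb{R}^N$ be a bounded open set and let $p,q:\Omega\to[1,\infty)$ be measurable with $q(x)\le p(x)\le p_+<\infty$ for all $x\in\Omega$. Let $s(x)=\frac{1}{p(x)-q(x)}\in(0,\infty]$ (with $s(x)=\infty$ where $p(x)=q(x)$). If there exists $a>1$ such that $$\int_0^{|\Omega|}a^{s^*(t)}\,dt=\infty,$$ then $L^{p(\cdot)}(\Omega)$ is not almost-compactly embedded in $L^{q(\cdot)}(\Omega)$.
   Context: For a measurable function $u$ on $\Omega$, $u^*(t)=\inf\{\lambda>0:|\{x\in\Omega:|u(x)|>\lambda\}|\le t\}$, $t\ge0$ (non-increasing rearrangement). For measurable $e:\Omega\to[1,\infty)$, $\|u\|_{e(\cdot)}=\inf\{\lambda>0:\int_\Omega|u(x)/\lambda|^{e(x)}dx\le1\}$ and $L^{e(\cdot)}(\Omega)$ is the set of measurable $u$ with finite norm. Almost-compact embedding: for Banach function spaces $X,Y$ on $\Omega$, $X$ is almost-compactly embedded in $Y$ if for every sequence $\{E_n\}$ of measurable subsets of $\Omega$ with $\chi_{E_n}\to0$ pointwise a.e. one has $\lim_{n\to\infty}\sup_{\|u\|_X\le1}\|u\chi_{E_n}\|_Y=0$. *)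

theory Defs
  imports "HOL-Analysis.Analysis"
begin

text \<open>Luxemburg norm of the variable exponent space L^{e(.)}(Omega), valued in ennreal
  (infinite iff the defining set is empty, i.e. u is not in L^{e(.)}).\<close>
definition var_norm :: "('a::euclidean_space \<Rightarrow> real) \<Rightarrow> 'a set \<Rightarrow> ('a \<Rightarrow> real) \<Rightarrow> ennreal" where
  "var_norm e \<Omega> u = Inf {ennreal l | l. l > 0 \<and>
      (\<integral>\<^sup>+ x \<in> \<Omega>. ennreal (\<bar>u x / l\<bar> powr e x) \<partial>lebesgue) \<le> 1}"

definition almost_compact_emb :: "('a::euclidean_space \<Rightarrow> real) \<Rightarrow> ('a \<Rightarrow> real) \<Rightarrow> 'a set \<Rightarrow> bool" where
  "almost_compact_emb p q \<Omega> \<longleftrightarrow>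
    (\<forall>E :: nat \<Rightarrow> 'a set.
       (\<forall>n. E n \<in> sets (lebesgue_on \<Omega>)) \<and>
       (AE x in lebesgue_on \<Omega>. (\<lambda>n. indicator (E n) x :: real) \<longlonglongrightarrow> 0) \<longrightarrow>
       (\<lambda>n. SUP u \<in> {u. u \<in> borel_measurable (lebesgue_on \<Omega>) \<and> var_norm p \<Omega> u \<le> 1}.
              var_norm q \<Omega> (\<lambda>x. u x * indicator (E n) x)) \<longlonglongrightarrow> 0)"

definition rearr :: "'a::euclidean_space set \<Rightarrow> ('a \<Rightarrow> ereal) \<Rightarrow> real \<Rightarrow> ereal" where
  "rearr \<Omega> f t = Inf {ereal l | l. l > 0 \<and>
      emeasure lebesgue {x \<in> \<Omega>. ereal l < \<bar>f x\<bar>} \<le> ennreal t}"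

definition epow :: "real \<Rightarrow> ereal \<Rightarrow> ennreal" where
  "epow a y = (if y = \<infinity> then \<infinity> else if y = -\<infinity> then 0 else ennreal (a powr real_of_ereal y))"

end

theory Submission
  imports Defs
begin

(*
  Let F = {p = q}. If F is not null, pick a point of F all of whose balls meet F in positive
  measure and let E_n be the intersections of F with shrinking balls around it: the
  L^p-normalized indicators |E_n|^(-1/p) \<chi>_{E_n} lie in the unit ball of L^p but have
  L^q-norm 1 on E_n, although \<chi>_{E_n} \<rightarrow> 0 a.e.
  If F is null, the divergence of \<integral> a^(s*(t)) dt forces the superlevel sets
  E_\<lambda> = {|s| > \<lambda>} = {p - q < 1/\<lambda>} to have measure at least a^(-2\<lambda>) for arbitrarily
  large \<lambda> (otherwise s*(t) \<le> log_a t^(-1/2) near 0, which is integrable). These sets shrink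
  to F, and on them the normalized indicators have L^q-norm at least |E_\<lambda>|^(1/\<lambda>) \<ge> a^(-2).
*)

lemma var_norm_le:
  assumes "l > 0" "(\<integral>\<^sup>+ x \<in> \<Omega>. ennreal (\<bar>u x / l\<bar> powr e x) \<partial>lebesgue) \<le> 1"
  shows "var_norm e \<Omega> u \<le> ennreal l"
  unfolding var_norm_def by (rule Inf_lower) (use assms in blast)

lemma var_norm_ge:
  assumes "\<And>l. 0 < l \<Longrightarrow> l < c \<Longrightarrow> 1 < (\<integral>\<^sup>+ x \<in> \<Omega>. ennreal (\<bar>u x / l\<bar> powr e x) \<partial>lebesgue)"
  shows "ennreal c \<le> var_norm e \<Omega> u"
  unfolding var_norm_def
proof (rule Inf_greatest, clarify)
  fix l :: real
  assume "l > 0" "(\<integral>\<^sup>+ x \<in> \<Omega>. ennreal (\<bar>u x / l\<bar> powr e x) \<partial>lebesgue) \<le> 1"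
  then have "c \<le> l" using assms[of l] by (meson not_le)
  then show "ennreal c \<le> ennreal l" by (rule ennreal_leI)
qed

lemma min_one_powr_le:
  fixes m \<theta> \<delta> :: real
  assumes "m > 0" "0 \<le> \<theta>" "\<theta> \<le> \<delta>"
  shows "min 1 (m powr \<delta>) \<le> m powr \<theta>"
proof (cases "m \<le> 1")
  case True
  then have "m powr \<delta> \<le> m powr \<theta>" using assms by (intro powr_mono') auto
  then show ?thesis by simp
next
  case False
  then show ?thesis using assms ge_one_powr_ge_zero[of m \<theta>] by simp
qed

definition normalized_indicator :: "('a::euclidean_space \<Rightarrow> real) \<Rightarrow> 'a set \<Rightarrow> 'a \<Rightarrow> real" where
  "normalized_indicator p E x = measure lebesgue E powr (-1 / p x) * indicator E x"

lemma var_norm_normalized_indicator_le_1: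
  fixes E \<Omega> :: "'a::euclidean_space set"
  assumes E: "E \<in> lmeasurable" "E \<subseteq> \<Omega>" "measure lebesgue E > 0"
    and p: "\<And>x. x \<in> E \<Longrightarrow> p x \<noteq> 0"
  shows "var_norm p \<Omega> (normalized_indicator p E) \<le> 1"
proof -
  define m where "m = measure lebesgue E"
  have m: "m > 0" using E by (simp add: m_def)
  have "(\<integral>\<^sup>+ x \<in> \<Omega>. ennreal (\<bar>normalized_indicator p E x / 1\<bar> powr p x) \<partial>lebesgue)
      = (\<integral>\<^sup>+ x. ennreal (1 / m) * indicator E x \<partial>lebesgue)"
  proof (rule nn_integral_cong)
    fix x
    show "ennreal (\<bar>normalized_indicator p E x / 1\<bar> powr p x) * indicator \<Omega> x = ennreal (1 / m) * indicator E x"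
    proof (cases "x \<in> E")
      case True
      then have "\<bar>normalized_indicator p E x / 1\<bar> powr p x = (m powr (-1 / p x)) powr p x"
        by (simp add: normalized_indicator_def m_def)
      also have "\<dots> = m powr (-1)"
        using p[OF True] by (simp only: powr_powr) simp
      also have "\<dots> = 1 / m"
        using m by (simp add: powr_minus_divide)
      finally show ?thesis using True E by auto
    qed (simp add: normalized_indicator_def)
  qed
  also have "\<dots> = 1"
    using E by (simp add: nn_integral_cmult_indicator emeasure_eq_measure2 m_def flip: ennreal_mult)
  finally show ?thesis
    using var_norm_le[where l = 1 and e = p] by simp
qed

(* At a level l < 1 the q-modular integrand is at least m^((p-q)/p) / (m l) on E, where m = |E|,
   and 0 \<le> (p-q)/p \<le> \<delta> because p \<ge> 1. *)
lemma var_norm_normalized_indicator_ge: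
  fixes E \<Omega> :: "'a::euclidean_space set"
  assumes E: "E \<in> lmeasurable" "E \<subseteq> \<Omega>" "measure lebesgue E > 0"
    and pq: "\<And>x. x \<in> E \<Longrightarrow> 1 \<le> q x" "\<And>x. x \<in> E \<Longrightarrow> q x \<le> p x" "\<And>x. x \<in> E \<Longrightarrow> p x - q x \<le> \<delta>"
  shows "ennreal (min 1 (measure lebesgue E powr \<delta>)) \<le> var_norm q \<Omega> (normalized_indicator p E)"
proof (rule var_norm_ge)
  define m where "m = measure lebesgue E"
  define c where "c = min 1 (m powr \<delta>)"
  fix l assume l: "0 < l" "l < min 1 (measure lebesgue E powr \<delta>)"
  then have "l < 1" "l < c" by (auto simp: c_def m_def)
  have m: "m > 0" using E by (simp add: m_def)
  have pointwise: "c / (m * l) \<le> \<bar>normalized_indicator p E x / l\<bar> powr q x" if x: "x \<in> E" for x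
  proof -
    define P Q where "P = p x" and "Q = q x"
    have Q: "1 \<le> Q" "Q \<le> P" "P - Q \<le> \<delta>" using pq x by (auto simp: P_def Q_def)
    have "c \<le> m powr ((P - Q) / P)"
      unfolding c_def using m Q by (intro min_one_powr_le) (auto intro: order_trans[OF divide_left_mono[of 1]])
    also have "\<dots> = m * m powr (- Q / P)"
      using m Q by (simp add: diff_divide_distrib powr_diff powr_minus_divide)
    finally have "c / (m * l) \<le> m powr (- Q / P) / l"
      using m l by (simp add: field_simps)
    also have "\<dots> \<le> m powr (- Q / P) / l powr Q"
      using l \<open>l < 1\<close> Q powr_mono'[of 1 Q l] by (intro divide_left_mono) auto
    also have "\<dots> = \<bar>normalized_indicator p E x / l\<bar> powr q x"
      using x m l Q by (simp add: normalized_indicator_def P_def Q_def m_def powr_divide powr_powr)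
    finally show ?thesis .
  qed
  have "ennreal (c / l) = (\<integral>\<^sup>+ x. ennreal (c / (m * l)) * indicator E x \<partial>lebesgue)"
    using E m l by (simp add: nn_integral_cmult_indicator emeasure_eq_measure2 c_def m_def flip: ennreal_mult)
  also have "\<dots> \<le> (\<integral>\<^sup>+ x \<in> \<Omega>. ennreal (\<bar>normalized_indicator p E x / l\<bar> powr q x) \<partial>lebesgue)"
    using E pointwise by (intro nn_integral_mono) (auto simp: indicator_def intro: ennreal_leI)
  finally have "ennreal (c / l) \<le> (\<integral>\<^sup>+ x \<in> \<Omega>. ennreal (\<bar>normalized_indicator p E x / l\<bar> powr q x) \<partial>lebesgue)" .
  moreover have "ennreal 1 < ennreal (c / l)"
    using l \<open>l < c\<close> by (subst ennreal_less_iff) auto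
  ultimately show "1 < (\<integral>\<^sup>+ x \<in> \<Omega>. ennreal (\<bar>normalized_indicator p E x / l\<bar> powr q x) \<partial>lebesgue)"
    unfolding ennreal_1 by (rule order.strict_trans2[rotated])
qed

lemma var_norm_normalized_indicator_ge_of_powr_le:
  fixes E \<Omega> :: "'a::euclidean_space set"
  assumes E: "E \<in> lmeasurable" "E \<subseteq> \<Omega>" and l: "l > 0"
    and c: "0 < c" "c \<le> 1" "c powr l \<le> measure lebesgue E"
    and pq: "\<And>x. x \<in> E \<Longrightarrow> 1 \<le> q x" "\<And>x. x \<in> E \<Longrightarrow> q x \<le> p x" "\<And>x. x \<in> E \<Longrightarrow> p x - q x \<le> 1 / l"
  shows "ennreal c \<le> var_norm q \<Omega> (normalized_indicator p E)"
proof -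
  have E_pos: "measure lebesgue E > 0"
    using c powr_gt_zero[of c l] by linarith
  have "c = (c powr l) powr (1 / l)"
    using c l by (simp add: powr_powr)
  also have "\<dots> \<le> measure lebesgue E powr (1 / l)"
    using c l by (intro powr_mono2) auto
  finally have "c \<le> min 1 (measure lebesgue E powr (1 / l))"
    using c by simp
  also have "ennreal \<dots> \<le> var_norm q \<Omega> (normalized_indicator p E)"
    by (rule var_norm_normalized_indicator_ge[OF E E_pos pq])
  finally show ?thesis by (simp add: ennreal_leI)
qed

lemma not_almost_compact_emb_if_normalized_indicators_large:
  fixes \<Omega> :: "'a::euclidean_space set" and E :: "nat \<Rightarrow> 'a set"
  assumes \<Omega>: "\<Omega> \<in> sets lebesgue" and p: "p \<in> borel_measurable (lebesgue_on \<Omega>)"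
    and E: "\<And>n. E n \<in> lmeasurable" "\<And>n. E n \<subseteq> \<Omega>" "\<And>n. measure lebesgue (E n) > 0"
    and p_nonzero: "\<And>n x. x \<in> E n \<Longrightarrow> p x \<noteq> 0"
    and AE: "AE x in lebesgue_on \<Omega>. (\<lambda>n. indicator (E n) x :: real) \<longlonglongrightarrow> 0"
    and c: "c > 0" "\<And>n. ennreal c \<le> var_norm q \<Omega> (normalized_indicator p (E n))"
  shows "\<not> almost_compact_emb p q \<Omega>"
proof
  assume "almost_compact_emb p q \<Omega>"
  have sets: "E n \<in> sets (lebesgue_on \<Omega>)" for n
    using \<Omega> E by (subst sets_restrict_space_iff) auto
  define S where "S n = (SUP u \<in> {u. u \<in> borel_measurable (lebesgue_on \<Omega>) \<and> var_norm p \<Omega> u \<le> 1}.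
      var_norm q \<Omega> (\<lambda>x. u x * indicator (E n) x))" for n
  have "S \<longlonglongrightarrow> 0"
    using \<open>almost_compact_emb p q \<Omega>\<close> sets AE unfolding almost_compact_emb_def S_def by blast
  then have "eventually (\<lambda>n. S n < ennreal c) sequentially"
    using c(1) by (intro order_tendstoD(2)) auto
  then obtain n where "S n < ennreal c"
    by (auto simp: eventually_sequentially)
  moreover have "ennreal c \<le> S n"
  proof -
    have "normalized_indicator p (E n) \<in> borel_measurable (lebesgue_on \<Omega>)"
      unfolding normalized_indicator_def using p sets by measurable
    moreover have "(\<lambda>x. normalized_indicator p (E n) x * indicator (E n) x) = normalized_indicator p (E n)"
      by (auto simp: normalized_indicator_def indicator_def)
    moreover have "var_norm p \<Omega> (normalized_indicator p (E n)) \<le> 1"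
      by (rule var_norm_normalized_indicator_le_1) (use E p_nonzero in auto)
    ultimately show ?thesis
      unfolding S_def using c(2)[of n] by (intro SUP_upper2[of "normalized_indicator p (E n)"]) auto
  qed
  ultimately show False by simp
qed

lemma AE_indicator_tendsto_0I:
  assumes "N \<in> null_sets M"
    and "\<And>x. x \<in> space M \<Longrightarrow> x \<notin> N \<Longrightarrow> eventually (\<lambda>n. x \<notin> E n) sequentially"
  shows "AE x in M. (\<lambda>n. indicator (E n) x :: real) \<longlonglongrightarrow> 0"
proof (rule AE_I')
  show "{x \<in> space M. \<not> (\<lambda>n. indicator (E n) x :: real) \<longlonglongrightarrow> 0} \<subseteq> N"
  proof clarify
    fix x assume x: "x \<in> space M" and not_lim: "\<not> (\<lambda>n. indicator (E n) x :: real) \<longlonglongrightarrow> 0"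
    show "x \<in> N"
    proof (rule ccontr)
      assume "x \<notin> N"
      have "eventually (\<lambda>n. indicator (E n) x = (0::real)) sequentially"
        using assms(2)[OF x(1) \<open>x \<notin> N\<close>] by (rule eventually_mono) simp
      then have "(\<lambda>n. indicator (E n) x :: real) \<longlonglongrightarrow> 0"
        by (rule tendsto_eventually)
      with not_lim show False by contradiction
    qed
  qed
qed fact

lemma exists_point_balls_not_null:
  fixes F :: "'a::euclidean_space set"
  assumes "F \<notin> null_sets lebesgue" "F \<in> sets lebesgue"
  shows "\<exists>x\<in>F. \<forall>r>0. F \<inter> ball x r \<notin> null_sets lebesgue"
proof (rule ccontr)
  assume "\<not> ?thesis"
  then obtain r where r: "\<And>x. x \<in> F \<Longrightarrow> r x > 0 \<and> F \<inter> ball x (r x) \<in> null_sets lebesgue"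
    by metis
  obtain \<G> where \<G>: "\<G> \<subseteq> (\<lambda>x. ball x (r x)) ` F" "countable \<G>" "\<Union>\<G> = (\<Union>x\<in>F. ball x (r x))"
    using Lindelof[of "(\<lambda>x. ball x (r x)) ` F"] by auto
  have "F \<subseteq> \<Union>\<G>"
    unfolding \<G>(3) using r by (auto intro!: centre_in_ball)
  then have "F = (\<Union>B\<in>\<G>. F \<inter> B)"
    by blast
  moreover have "(\<Union>B\<in>\<G>. F \<inter> B) \<in> null_sets lebesgue"
    using \<G>(1,2) r by (intro null_sets_UN') auto
  ultimately show False using assms(1) by simp
qed

lemma not_almost_compact_emb_if_coincidence_set_not_null:
  fixes \<Omega> :: "'a::euclidean_space set"
  assumes \<Omega>: "\<Omega> \<in> lmeasurable"
    and pq_meas: "p \<in> borel_measurable (lebesgue_on \<Omega>)" "q \<in> borel_measurable (lebesgue_on \<Omega>)"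
    and q_ge_1: "\<And>x. x \<in> \<Omega> \<Longrightarrow> 1 \<le> q x"
    and not_null: "{x \<in> \<Omega>. p x = q x} \<notin> null_sets lebesgue"
  shows "\<not> almost_compact_emb p q \<Omega>"
proof -
  define F where "F = {x \<in> \<Omega>. p x = q x}"
  have "{x \<in> space (lebesgue_on \<Omega>). p x = q x} \<in> sets (lebesgue_on \<Omega>)"
    using pq_meas by measurable
  then have "F \<in> sets (lebesgue_on \<Omega>)"
    by (simp add: F_def)
  then have F: "F \<in> sets lebesgue" "F \<subseteq> \<Omega>"
    using \<Omega> by (auto simp: sets_restrict_space_iff)
  obtain x0 where x0: "x0 \<in> F" "\<And>r. r > 0 \<Longrightarrow> F \<inter> ball x0 r \<notin> null_sets lebesgue"
    using exists_point_balls_not_null[OF not_null[folded F_def] F(1)] by blast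
  define E where "E n = F \<inter> ball x0 (inverse (Suc n))" for n
  have E: "E n \<in> lmeasurable" "E n \<subseteq> \<Omega>" "measure lebesgue (E n) > 0" for n
  proof -
    show "E n \<subseteq> \<Omega>" using F by (auto simp: E_def)
    then show E_fin: "E n \<in> lmeasurable" using \<Omega> F by (intro fmeasurableI2[OF \<Omega>]) (auto simp: E_def)
    have "E n \<notin> null_sets lebesgue" using x0(2)[of "inverse (Suc n)"] by (simp add: E_def)
    then show "measure lebesgue (E n) > 0"
      using E_fin by (simp add: emeasure_eq_measure2 null_sets_def zero_less_measure_iff)
  qed
  have pq_on_E: "x \<in> E n \<Longrightarrow> p x = q x \<and> 1 \<le> q x" for n x
    using F by (auto simp: E_def F_def q_ge_1)
  show ?thesis
  proof (rule not_almost_compact_emb_if_normalized_indicators_large[OF fmeasurableD[OF \<Omega>] pq_meas(1) E])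
    show "AE x in lebesgue_on \<Omega>. (\<lambda>n. indicator (E n) x :: real) \<longlonglongrightarrow> 0"
    proof (rule AE_indicator_tendsto_0I)
      show "{x0} \<in> null_sets (lebesgue_on \<Omega>)"
        using \<Omega> F x0(1) by (subst null_sets_restrict_space) auto
      fix x assume "x \<notin> {x0}"
      then have "eventually (\<lambda>n. inverse (real (Suc n)) < dist x0 x) sequentially"
        by (intro order_tendstoD(2)[OF LIMSEQ_inverse_real_of_nat]) simp
      then show "eventually (\<lambda>n. x \<notin> E n) sequentially"
        by eventually_elim (auto simp: E_def)
    qed
    show "ennreal 1 \<le> var_norm q \<Omega> (normalized_indicator p (E n))" for n
    proof -
      have "ennreal (min 1 (measure lebesgue (E n) powr 0)) \<le> var_norm q \<Omega> (normalized_indicator p (E n))"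
        by (rule var_norm_normalized_indicator_ge[OF E]) (use pq_on_E in auto)
      then show ?thesis using E(3)[of n] by simp
    qed
  qed (auto dest: pq_on_E)
qed

lemma rearr_le:
  assumes "l > 0" "emeasure lebesgue {x \<in> \<Omega>. ereal l < \<bar>f x\<bar>} \<le> ennreal t"
  shows "rearr \<Omega> f t \<le> ereal l"
  unfolding rearr_def by (rule Inf_lower) (use assms in blast)

lemma epow_le:
  assumes "a > 1" "x \<le> ereal y"
  shows "epow a x \<le> ennreal (a powr y)"
  using assms by (cases x) (auto simp: epow_def intro!: ennreal_leI powr_mono)

lemma epow_rearr_le_if_superlevel_small:
  assumes a: "a > 1" and "L > 0"
    and small: "\<And>l. l \<ge> L \<Longrightarrow> emeasure lebesgue {x \<in> \<Omega>. ereal l < \<bar>f x\<bar>} \<le> ennreal (a powr (-2 * l))"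
    and t: "t > 0"
  shows "epow a (rearr \<Omega> f t) \<le> ennreal (a powr L + t powr (-1/2))"
proof -
  have ln_a: "ln a > 0" using a by simp
  define l where "l = max L (- ln t / (2 * ln a))"
  have "a powr (-2 * l) \<le> a powr (-2 * (- ln t / (2 * ln a)))"
    using a by (intro powr_mono) (auto simp: l_def)
  also have "\<dots> = t" using a ln_a t by (simp add: powr_def)
  finally have "emeasure lebesgue {x \<in> \<Omega>. ereal l < \<bar>f x\<bar>} \<le> ennreal t"
    using small[of l] by (auto simp: l_def intro: order_trans ennreal_leI)
  then have "rearr \<Omega> f t \<le> ereal l"
    using \<open>L > 0\<close> by (intro rearr_le) (auto simp: l_def)
  then have "epow a (rearr \<Omega> f t) \<le> ennreal (a powr l)"
    using a by (intro epow_le)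
  also have "a powr l \<le> a powr L + t powr (-1/2)"
  proof (cases "l = L")
    case False
    then have "a powr l = t powr (-1/2)"
      using ln_a t by (auto simp: l_def powr_def max_def split: if_splits)
    then show ?thesis by simp
  qed simp
  finally show ?thesis by (simp add: ennreal_leI)
qed

lemma rearr_integral_finite_if_superlevel_small:
  assumes a: "a > 1" and L: "L > 0" and T: "0 \<le> T"
    and small: "\<And>l. l \<ge> L \<Longrightarrow> emeasure lebesgue {x \<in> \<Omega>. ereal l < \<bar>f x\<bar>} \<le> ennreal (a powr (-2 * l))"
  shows "(\<integral>\<^sup>+ t \<in> {0..T}. epow a (rearr \<Omega> f t) \<partial>lborel) < \<infinity>"
proof -
  define g where "g t = a powr L + t powr (-1/2)" for t :: real
  have "(g has_integral (T * a powr L + T powr (1/2) / (1/2))) {0..T}"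
    unfolding g_def using has_integral_powr_from_0[of "-1/2" T] has_integral_const_real[of "a powr L" 0 T] T
    by (intro has_integral_add) auto
  then have int_g: "(\<integral>\<^sup>+ t. ennreal (g t) * indicator {0..T} t \<partial>lborel) < \<infinity>"
    by (subst nn_integral_has_integral_lebesgue') (auto simp: g_def)
  have "(\<integral>\<^sup>+ t \<in> {0..T}. epow a (rearr \<Omega> f t) \<partial>lborel) \<le> (\<integral>\<^sup>+ t. ennreal (g t) * indicator {0..T} t \<partial>lborel)"
  proof (rule nn_integral_mono_AE)
    show "AE t in lborel. epow a (rearr \<Omega> f t) * indicator {0..T} t \<le> ennreal (g t) * indicator {0..T} t"
      using AE_lborel_singleton[of 0]
    proof eventually_elim
      case (elim t)
      then show ?case
        using epow_rearr_le_if_superlevel_small[OF a L small, of t]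
        by (auto simp: g_def indicator_def)
    qed
  qed
  with int_g show ?thesis by (simp add: order_le_less_trans)
qed

lemma superlevel_measure_large_if_rearr_integral_infinite:
  assumes "a > 1" "0 \<le> T" "(\<integral>\<^sup>+ t \<in> {0..T}. epow a (rearr \<Omega> f t) \<partial>lborel) = \<infinity>"
  shows "\<exists>l\<ge>L. ennreal (a powr (-2 * l)) < emeasure lebesgue {x \<in> \<Omega>. ereal l < \<bar>f x\<bar>}"
proof (rule ccontr)
  assume "\<not> ?thesis"
  then have "emeasure lebesgue {x \<in> \<Omega>. ereal l < \<bar>f x\<bar>} \<le> ennreal (a powr (-2 * l))" if "l \<ge> max L 1" for l
    using that by (auto simp: not_less)
  then have "(\<integral>\<^sup>+ t \<in> {0..T}. epow a (rearr \<Omega> f t) \<partial>lborel) < \<infinity>"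
    using assms(1,2) by (intro rearr_integral_finite_if_superlevel_small[of _ "max L 1"]) auto
  then show False using assms(3) by simp
qed

lemma ereal_less_abs_inverse_gap_iff:
  fixes l p q :: real
  assumes "l > 0" "q \<le> p"
  shows "ereal l < \<bar>if p = q then \<infinity> else ereal (1 / (p - q))\<bar> \<longleftrightarrow> p - q < 1 / l"
proof (cases "p = q")
  case True
  then show ?thesis using assms(1) by simp
next
  case False
  then have "p - q > 0" using assms(2) by simp
  then show ?thesis using False assms(1) by (simp add: field_simps)
qed

lemma AE_indicator_gap_sublevel_tendsto_0:
  fixes \<Omega> :: "'a::euclidean_space set" and p q :: "'a \<Rightarrow> real" and \<epsilon> :: "nat \<Rightarrow> real"
  assumes "\<epsilon> \<longlonglongrightarrow> 0" "\<Omega> \<in> sets lebesgue" "{x \<in> \<Omega>. p x = q x} \<in> null_sets lebesgue"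
    and "\<And>x. x \<in> \<Omega> \<Longrightarrow> q x \<le> p x"
  shows "AE x in lebesgue_on \<Omega>. (\<lambda>k. indicator {x \<in> \<Omega>. p x - q x < \<epsilon> k} x :: real) \<longlonglongrightarrow> 0"
proof (rule AE_indicator_tendsto_0I)
  show "{x \<in> \<Omega>. p x = q x} \<in> null_sets (lebesgue_on \<Omega>)"
    using assms(2,3) by (subst null_sets_restrict_space) auto
  fix x assume "x \<in> space (lebesgue_on \<Omega>)" "x \<notin> {x \<in> \<Omega>. p x = q x}"
  then have "x \<in> \<Omega>" "p x \<noteq> q x"
    by auto
  then have "p x - q x > 0"
    using assms(4)[of x] by simp
  then have "eventually (\<lambda>k. \<epsilon> k < p x - q x) sequentially"
    by (intro order_tendstoD(2)[OF assms(1)])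
  then show "eventually (\<lambda>k. x \<notin> {x \<in> \<Omega>. p x - q x < \<epsilon> k}) sequentially"
    by eventually_elim auto
qed

lemma not_almost_compact_emb_if_rearrangement_integral_infinite:
  fixes \<Omega> :: "'a::euclidean_space set" and s :: "'a \<Rightarrow> ereal"
  assumes \<Omega>: "\<Omega> \<in> lmeasurable"
    and pq_meas: "p \<in> borel_measurable (lebesgue_on \<Omega>)" "q \<in> borel_measurable (lebesgue_on \<Omega>)"
    and q_ge_1: "\<And>x. x \<in> \<Omega> \<Longrightarrow> 1 \<le> q x" and q_le_p: "\<And>x. x \<in> \<Omega> \<Longrightarrow> q x \<le> p x"
    and s: "\<And>x. x \<in> \<Omega> \<Longrightarrow> s x = (if p x = q x then \<infinity> else ereal (1 / (p x - q x)))"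
    and null: "{x \<in> \<Omega>. p x = q x} \<in> null_sets lebesgue"
    and a: "a > 1" and T: "0 \<le> T" and infinite: "(\<integral>\<^sup>+ t \<in> {0..T}. epow a (rearr \<Omega> s t) \<partial>lborel) = \<infinity>"
  shows "\<not> almost_compact_emb p q \<Omega>"
proof -
  have "\<forall>k. \<exists>l. real k + 1 \<le> l \<and>
      ennreal (a powr (-2 * l)) < emeasure lebesgue {x \<in> \<Omega>. ereal l < \<bar>s x\<bar>}"
    using superlevel_measure_large_if_rearr_integral_infinite[OF a T infinite] by blast
  then obtain level where level: "\<And>k. real k + 1 \<le> level k"
    "\<And>k. ennreal (a powr (-2 * level k)) < emeasure lebesgue {x \<in> \<Omega>. ereal (level k) < \<bar>s x\<bar>}"
    by (auto dest!: choice)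
  have level_pos: "level k > 0" for k
    using level(1)[of k] by linarith
  define E where "E k = {x \<in> \<Omega>. p x - q x < 1 / level k}" for k
  have superlevel_eq: "{x \<in> \<Omega>. ereal (level k) < \<bar>s x\<bar>} = E k" for k
    using ereal_less_abs_inverse_gap_iff[OF level_pos q_le_p] s by (auto simp: E_def)
  have "{x \<in> space (lebesgue_on \<Omega>). p x - q x < 1 / level k} \<in> sets (lebesgue_on \<Omega>)" for k
    using pq_meas by measurable
  then have E_sets: "E k \<in> sets lebesgue" "E k \<subseteq> \<Omega>" for k
    using \<Omega> by (auto simp: E_def sets_restrict_space_iff)
  have E_fin: "E k \<in> lmeasurable" for k
    using fmeasurableI2[OF \<Omega> E_sets(2) E_sets(1)] .
  have E_large: "a powr (-2 * level k) < measure lebesgue (E k)" for k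
    using level(2)[of k] E_fin[of k] a by (simp add: superlevel_eq emeasure_eq_measure2 ennreal_less_iff)
  then have E_pos: "measure lebesgue (E k) > 0" for k
    by (rule order.strict_trans1[rotated]) simp
  show ?thesis
  proof (rule not_almost_compact_emb_if_normalized_indicators_large[OF fmeasurableD[OF \<Omega>] pq_meas(1) E_fin E_sets(2) E_pos])
    have "real k \<le> level k" for k
      using level(1)[of k] by linarith
    then have "filterlim level at_top sequentially"
      by (intro filterlim_at_top_mono[OF filterlim_real_sequentially] always_eventually) auto
    then have "(\<lambda>k. 1 / level k) \<longlonglongrightarrow> 0"
      using tendsto_inverse_0_at_top by (simp add: inverse_eq_divide)
    then show "AE x in lebesgue_on \<Omega>. (\<lambda>n. indicator (E n) x :: real) \<longlonglongrightarrow> 0"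
      unfolding E_def using fmeasurableD[OF \<Omega>] null q_le_p by (rule AE_indicator_gap_sublevel_tendsto_0)
    show "a powr (-2) > 0" using a by simp
    show "ennreal (a powr (-2)) \<le> var_norm q \<Omega> (normalized_indicator p (E k))" for k
    proof (rule var_norm_normalized_indicator_ge_of_powr_le[OF E_fin E_sets(2) level_pos])
      show "(a powr (-2)) powr level k \<le> measure lebesgue (E k)"
        using E_large[of k] by (simp add: powr_powr)
    qed (use a powr_mono[of "-2" 0 a] q_ge_1 q_le_p E_sets(2) in \<open>auto simp: E_def\<close>)
  qed (use E_sets q_ge_1 q_le_p in fastforce)
qed

theorem theorem3p7:
  fixes \<Omega> :: "'a::euclidean_space set"
    and p q :: "'a \<Rightarrow> real" and p_plus :: real
    and s :: "'a \<Rightarrow> ereal"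
  assumes "open \<Omega>" and "bounded \<Omega>"
    and "p \<in> borel_measurable (lebesgue_on \<Omega>)" and "q \<in> borel_measurable (lebesgue_on \<Omega>)"
    and "\<And>x. x \<in> \<Omega> \<Longrightarrow> 1 \<le> q x"
    and "\<And>x. x \<in> \<Omega> \<Longrightarrow> q x \<le> p x"
    and "\<And>x. x \<in> \<Omega> \<Longrightarrow> p x \<le> p_plus"
    and "\<And>x. s x = (if p x = q x then \<infinity> else ereal (1 / (p x - q x)))"
    and "\<exists>a > 1. (\<integral>\<^sup>+ t \<in> {0..measure lebesgue \<Omega>}. epow a (rearr \<Omega> s t) \<partial>lborel) = \<infinity>"
  shows "\<not> almost_compact_emb p q \<Omega>"
proof -
  have \<Omega>: "\<Omega> \<in> lmeasurable"
    using assms(1,2) by (rule lmeasurable_open[rotated])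
  obtain a where a: "a > 1"
    and infinite: "(\<integral>\<^sup>+ t \<in> {0..measure lebesgue \<Omega>}. epow a (rearr \<Omega> s t) \<partial>lborel) = \<infinity>"
    using assms(9) by blast
  show ?thesis
  proof (cases "{x \<in> \<Omega>. p x = q x} \<in> null_sets lebesgue")
    case True
    show ?thesis
      by (rule not_almost_compact_emb_if_rearrangement_integral_infinite
          [OF \<Omega> assms(3-6) assms(8) True a measure_nonneg infinite])
  next
    case False
    show ?thesis
      by (rule not_almost_compact_emb_if_coincidence_set_not_null[OF \<Omega> assms(3-5) False])
  qed
qed

end
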